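(* Let $q$ be a prime power, $2\le k\le n$, and let $\mathcal{C} \subseteq \mathbb{F}_q^n$ be a linear code of dimension $k$. Then $$\mathbb{E}[\mathcal{C}] = nH_n - \sum_{s=k}^{n-1} \frac{\alpha(\mathcal{C},s)}{\binom{n-1}{s}}.$$
   Context: $H_m = \sum_{i=1}^m 1/i$ is the $m$-th harmonic number ($H_0=0$). For a linear code $\mathcal{C}\subseteq\mathbb{F}_q^n$ of dimension $k$, $\mathbb{E}[\mathcal{C}]$ is $\mathbb{E}[G]$ for any generator matrix $G\in\mathbb{F}_q^{k\times n}$ of $\mathcal{C}$, where $\mathbb{E}[G]$ is the expected number of draws when columns of $G$ are drawn independently and uniformly at random from its $n$ columns (with repetition) until the drawn columns span $\mathbb{F}_q^k$; this does not depend on $G$. Writing $g_j$ for the $j$-th column of a generator matrix $G$ of $\mathcal{C}$, for $0\le s\le n$ let $\alpha(\mathcal{C},s) = |\{S\subseteq\{1,\dots,n\} : |S|=s,\ \langle g_j : j\in S\rangle = \mathbb{F}_q^k\}|$, the number of information sets of $\mathcal{C}$ of size $s$ (independent of the choice of $G$). *)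

theory Defs
  imports Complex_Main "HOL-Analysis.Harmonic_Numbers"
begin

text \<open>A k x n matrix G over a finite field 'a is a function G i j (row i < k, column j < n).
  Vectors of F_q^k are functions v :: nat \<Rightarrow> 'a, only coordinates i < k matter.\<close>

definition col :: "(nat \<Rightarrow> nat \<Rightarrow> 'a) \<Rightarrow> nat \<Rightarrow> nat \<Rightarrow> 'a" where
  "col G j = (\<lambda>i. G i j)"

definition spans :: "nat \<Rightarrow> (nat \<Rightarrow> nat \<Rightarrow> 'a::field) \<Rightarrow> nat set \<Rightarrow> bool" where
  "spans k G S \<longleftrightarrow>
     (\<forall>v :: nat \<Rightarrow> 'a. \<exists>c :: nat \<Rightarrow> 'a. \<forall>i<k. v i = (\<Sum>j\<in>S. c j * col G j i))"

text \<open>Probability that the stopping time T (number of uniform draws, with repetition, from the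
  n columns until the drawn columns span F_q^k) equals t.\<close>
definition stop_prob :: "nat \<Rightarrow> nat \<Rightarrow> (nat \<Rightarrow> nat \<Rightarrow> 'a::field) \<Rightarrow> nat \<Rightarrow> real" where
  "stop_prob k n G t =
     real (card {xs. length xs = t \<and> set xs \<subseteq> {0..<n} \<and>
                    spans k G (set xs) \<and> \<not> spans k G (set (butlast xs))}) / real n ^ t"

definition expected_draws :: "nat \<Rightarrow> nat \<Rightarrow> (nat \<Rightarrow> nat \<Rightarrow> 'a::field) \<Rightarrow> real" where
  "expected_draws k n G = (\<Sum>t. real t * stop_prob k n G t)"

definition alpha :: "nat \<Rightarrow> nat \<Rightarrow> (nat \<Rightarrow> nat \<Rightarrow> 'a::field) \<Rightarrow> nat \<Rightarrow> nat" where
  "alpha k n G s = card {S. S \<subseteq> {0..<n} \<and> card S = s \<and> spans k G S}"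

end

theory Submission
  imports Defs "HOL-Library.FuncSet" "HOL-Combinatorics.Stirling"
begin

text \<open>
  Let T be the number of draws and call a set of column indices non-spanning if its columns do
  not span F_q^k. Then E[T] = \<Sum>_t P(T > t), and T > t exactly when the letters of the
  first t draws form a non-spanning set. For a set S of size s there are s! S(t, s) words of length
  t with letter set S (S(t, s) the Stirling numbers of the second kind), and their recurrence gives
  \<Sum>_t s! S(t, s) / n^t = 1 / C(n-1, s) for s < n. Hence E[T] is the sum of
  1 / C(n-1, |S|) over the non-spanning S. Over all proper subsets of the n columns this sum is
  \<Sum>_s C(n, s) / C(n-1, s) = \<Sum>_s n / (n - s) = n H_n, and the proper subsets that
  do span are the information sets of sizes k, ..., n-1.
\<close>

lemma spans_mono:
  assumes "finite T" and "S \<subseteq> T" and "spans k G S"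
  shows "spans k G T"
  unfolding spans_def
proof
  fix v :: "nat \<Rightarrow> 'a"
  obtain c where c: "\<forall>i<k. v i = (\<Sum>j\<in>S. c j * col G j i)"
    using assms(3) unfolding spans_def by blast
  have "(\<Sum>j\<in>T. (if j \<in> S then c j else 0) * col G j i) = (\<Sum>j\<in>S. c j * col G j i)" for i
    using assms(1,2) by (intro sum.mono_neutral_cong_right) auto
  then show "\<exists>c. \<forall>i<k. v i = (\<Sum>j\<in>T. c j * col G j i)"
    using c by (intro exI[of _ "\<lambda>j. if j \<in> S then c j else 0"]) simp
qed

text \<open>Over a field with q elements, spanning makes the coefficient map from functions on S
  onto the vectors of length k surjective, so q^k \<le> q^|S|.\<close>
lemma spans_card_ge:
  fixes G :: "nat \<Rightarrow> nat \<Rightarrow> 'a::{finite,field}"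
  assumes "finite S" and "spans k G S"
  shows "k \<le> card S"
proof -
  define h where "h c = (\<lambda>i. if i < k then \<Sum>j\<in>S. c j * col G j i else undefined)"
    for c :: "nat \<Rightarrow> 'a"
  have onto: "({..<k} \<rightarrow>\<^sub>E UNIV) \<subseteq> h ` (S \<rightarrow>\<^sub>E UNIV)"
  proof
    fix v :: "nat \<Rightarrow> 'a"
    assume v: "v \<in> {..<k} \<rightarrow>\<^sub>E UNIV"
    obtain c where "\<forall>i<k. v i = (\<Sum>j\<in>S. c j * col G j i)"
      using assms(2) unfolding spans_def by blast
    with v have "v = h (restrict c S)"
      by (auto simp: h_def fun_eq_iff PiE_def extensional_def)
    then show "v \<in> h ` (S \<rightarrow>\<^sub>E UNIV)" by simp
  qed
  have "CARD('a) ^ k = card ({..<k} \<rightarrow>\<^sub>E (UNIV :: 'a set))"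
    by (simp add: card_PiE)
  also have "\<dots> \<le> card (h ` (S \<rightarrow>\<^sub>E UNIV))"
    using onto assms(1) by (intro card_mono finite_imageI finite_PiE) auto
  also have "\<dots> \<le> card (S \<rightarrow>\<^sub>E (UNIV :: 'a set))"
    using assms(1) by (intro card_image_le finite_PiE) auto
  also have "\<dots> = CARD('a) ^ card S"
    using assms(1) by (simp add: card_PiE)
  finally have "CARD('a) ^ k \<le> CARD('a) ^ card S" .
  moreover have "1 < CARD('a)"
    using card_mono[of UNIV "{0 :: 'a, 1}"] by simp
  ultimately show ?thesis
    using power_le_imp_le_exp by blast
qed

lemma finite_words_with_letters:
  "finite S \<Longrightarrow> finite {xs. length xs = t \<and> set xs = S}"
  by (rule finite_subset[OF _ finite_lists_length_eq[of S t]]) auto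

lemma card_words_with_letters:
  assumes "finite S"
  shows "card {xs. length xs = t \<and> set xs = S} = fact (card S) * Stirling t (card S)"
  using assms
proof (induction t arbitrary: S)
  case 0
  show ?case
    by (cases "card S") (use 0 in auto)
next
  case (Suc t)
  let ?W = "\<lambda>t S. {xs. length xs = t \<and> set xs = S}"
  define B where "B x = ?W t S \<union> ?W t (S - {x})" for x
  have "?W (Suc t) S = (\<lambda>(x, ys). x # ys) ` (SIGMA x:S. B x)"
  proof (intro equalityI subsetI)
    fix xs
    assume "xs \<in> ?W (Suc t) S"
    then obtain x ys where xs: "xs = x # ys" "length ys = t" "insert x (set ys) = S"
      by (cases xs) auto
    then have "set ys = S \<or> set ys = S - {x}"
      by auto
    with xs have "(x, ys) \<in> (SIGMA x:S. B x)"
      by (auto simp: B_def)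
    with xs(1) show "xs \<in> (\<lambda>(x, ys). x # ys) ` (SIGMA x:S. B x)"
      by (auto intro: rev_image_eqI)
  next
    fix xs
    assume "xs \<in> (\<lambda>(x, ys). x # ys) ` (SIGMA x:S. B x)"
    then obtain x ys where "xs = x # ys" and "x \<in> S" and "ys \<in> B x"
      by auto
    then show "xs \<in> ?W (Suc t) S"
      by (auto simp: B_def insert_absorb)
  qed
  moreover have "inj_on (\<lambda>(x, ys). x # ys) (SIGMA x:S. B x)"
    by (auto simp: inj_on_def)
  ultimately have "card (?W (Suc t) S) = (\<Sum>x\<in>S. card (B x))"
    using Suc.prems by (simp add: card_image card_SigmaI B_def finite_words_with_letters)
  also have "\<dots> = (\<Sum>x\<in>S. card (?W t S) + card (?W t (S - {x})))"
    unfolding B_def using Suc.prems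
    by (intro sum.cong refl card_Un_disjoint finite_words_with_letters) auto
  also have "\<dots> = card S * (fact (card S) * Stirling t (card S)
                    + fact (card S - 1) * Stirling t (card S - 1))"
    using Suc.prems by (simp add: Suc.IH)
  also have "\<dots> = fact (card S) * Stirling (Suc t) (card S)"
    by (cases "card S") (simp_all add: algebra_simps)
  finally show ?case .
qed

lemma fact_Stirling_le_power: "fact s * Stirling t s \<le> s ^ t"
proof -
  have "fact s * Stirling t s = card {xs. length xs = t \<and> set xs = {..<s}}"
    by (simp add: card_words_with_letters)
  also have "\<dots> \<le> card {xs. set xs \<subseteq> {..<s} \<and> length xs = t}"
    by (rule card_mono[OF finite_lists_length_eq]) auto
  also have "\<dots> = s ^ t"
    by (simp add: card_lists_length_eq)
  finally show ?thesis .
qed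

lemma fact_Stirling_Suc_Suc:
  "fact (Suc s) * Stirling (Suc t) (Suc s)
     = Suc s * (fact (Suc s) * Stirling t (Suc s) + fact s * Stirling t s)"
  by (simp add: algebra_simps)

lemma fact_Stirling_div_power_le:
  "real (fact s * Stirling t s) / real n ^ t \<le> (real s / real n) ^ t"
proof -
  have "real (fact s * Stirling t s) \<le> real s ^ t"
    using fact_Stirling_le_power by (metis of_nat_le_iff of_nat_power)
  then show ?thesis
    by (simp add: power_divide divide_right_mono)
qed

lemma summable_fact_Stirling_div_power:
  assumes "s < n"
  shows "summable (\<lambda>t. real (fact s * Stirling t s) / real n ^ t)"
proof (rule summable_comparison_test')
  show "summable (\<lambda>t. (real s / real n) ^ t)"
    using assms by (intro summable_geometric) simp
qed (simp only: norm_divide norm_of_nat norm_power fact_Stirling_div_power_le)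

lemma times_fact_Stirling_div_power_tendsto_0:
  assumes "s < n"
  shows "(\<lambda>t. real t * (real (fact s * Stirling t s) / real n ^ t)) \<longlonglongrightarrow> 0"
proof (rule Lim_null_comparison)
  show "(\<lambda>t. real t * (real s / real n) ^ t) \<longlonglongrightarrow> 0"
    using assms by (intro powser_times_n_limit_0) simp
  show "\<forall>\<^sub>F t in sequentially. norm (real t * (real (fact s * Stirling t s) / real n ^ t))
          \<le> real t * (real s / real n) ^ t"
    by (intro always_eventually allI)
      (simp only: norm_mult norm_divide norm_of_nat norm_power of_nat_0_le_iff
        mult_left_mono fact_Stirling_div_power_le)
qed

lemma Suc_times_binomial_pred:
  "Suc s * ((n - 1) choose Suc s) = (n - Suc s) * ((n - 1) choose s)"
  using times_binomial_minus1_eq[of "Suc s" "n - 1"] binomial_absorb_comp[of "n - 1" s]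
  by (simp add: diff_diff_add)

lemma sums_fact_Stirling_div_power:
  assumes "s < n"
  shows "(\<lambda>t. real (fact s * Stirling t s) / real n ^ t) sums (1 / real ((n - 1) choose s))"
  using assms
proof (induction s)
  case 0
  have "(\<lambda>t. real (fact 0 * Stirling t 0) / real n ^ t) = (\<lambda>t. if t = 0 then 1 else 0)"
    by (auto simp: fun_eq_iff gr0_conv_Suc)
  then show ?case
    using sums_single[of 0 "\<lambda>_. 1 :: real"] by simp
next
  case (Suc s)
  define f where "f = (\<lambda>t. real (fact (Suc s) * Stirling t (Suc s)) / real n ^ t)"
  define a where "a = suminf f"
  define b where "b = 1 / real ((n - 1) choose s)"
  have f_sums: "f sums a"
    unfolding a_def f_def by (intro summable_sums summable_fact_Stirling_div_power Suc.prems)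
  have g_sums: "(\<lambda>t. real (fact s * Stirling t s) / real n ^ t) sums b"
    unfolding b_def by (rule Suc.IH) (use Suc.prems in simp)
  have f_Suc: "(\<lambda>t. f (Suc t))
      = (\<lambda>t. real (Suc s) / real n * (f t + real (fact s * Stirling t s) / real n ^ t))"
    using Suc.prems unfolding f_def fact_Stirling_Suc_Suc by (simp add: fun_eq_iff field_simps)
  have "f 0 = 0"
    by (simp add: f_def)
  txt \<open>Summing the recurrence over t, with f 0 = 0, gives a linear equation for a.\<close>
  have "(\<lambda>t. f (Suc t)) sums (real (Suc s) / real n * (a + b))"
    unfolding f_Suc by (intro sums_mult sums_add f_sums g_sums)
  moreover have "(\<lambda>t. f (Suc t)) sums a"
    using f_sums \<open>f 0 = 0\<close> by (simp add: sums_Suc_iff)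
  ultimately have "a = real (Suc s) / real n * (a + b)"
    by (rule sums_unique2[symmetric])
  then have "a = real (Suc s) * b / real (n - Suc s)"
    using Suc.prems by (simp add: of_nat_diff field_simps)
  also have "\<dots> = real (Suc s) / real ((n - Suc s) * ((n - 1) choose s))"
    by (simp add: b_def)
  also have "\<dots> = 1 / real ((n - 1) choose Suc s)"
    unfolding Suc_times_binomial_pred[symmetric] of_nat_mult
    by (rule nonzero_divide_mult_cancel_left) simp
  finally show ?case
    using f_sums unfolding f_def by simp
qed

lemma sums_Suc_times_diff:
  fixes q :: "nat \<Rightarrow> real"
  assumes "q sums L" and "(\<lambda>t. real t * q t) \<longlonglongrightarrow> 0"
  shows "(\<lambda>t. real (Suc t) * (q t - q (Suc t))) sums L"
proof -
  have partial_sums: "(\<Sum>t<T. real (Suc t) * (q t - q (Suc t))) = (\<Sum>t<T. q t) - real T * q T" for T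
    by (induction T) (simp_all add: algebra_simps)
  have "(\<lambda>T. (\<Sum>t<T. q t) - real T * q T) \<longlonglongrightarrow> L - 0"
    using assms by (intro tendsto_diff) (simp_all add: sums_def)
  then show ?thesis
    unfolding sums_def partial_sums by simp
qed

definition nonspanning_words :: "nat \<Rightarrow> nat \<Rightarrow> (nat \<Rightarrow> nat \<Rightarrow> 'a::field) \<Rightarrow> nat \<Rightarrow> nat list set" where
  "nonspanning_words k n G t = {xs. length xs = t \<and> set xs \<subseteq> {0..<n} \<and> \<not> spans k G (set xs)}"

definition nonspanning_sets :: "nat \<Rightarrow> nat \<Rightarrow> (nat \<Rightarrow> nat \<Rightarrow> 'a::field) \<Rightarrow> nat set set" where
  "nonspanning_sets k n G = {S. S \<subseteq> {0..<n} \<and> \<not> spans k G S}"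

text \<open>P(T > t): the first t draws do not span.\<close>
definition tail_prob :: "nat \<Rightarrow> nat \<Rightarrow> (nat \<Rightarrow> nat \<Rightarrow> 'a::field) \<Rightarrow> nat \<Rightarrow> real" where
  "tail_prob k n G t = real (card (nonspanning_words k n G t)) / real n ^ t"

lemma finite_nonspanning_sets: "finite (nonspanning_sets k n G)"
  unfolding nonspanning_sets_def by (rule finite_subset[of _ "Pow {0..<n}"]) auto

lemma card_nonspanning_words:
  "card (nonspanning_words k n G t)
     = (\<Sum>S\<in>nonspanning_sets k n G. fact (card S) * Stirling t (card S))"
proof -
  have fin: "finite S" if "S \<in> nonspanning_sets k n G" for S
    using that finite_subset unfolding nonspanning_sets_def by blast
  have "nonspanning_words k n G t
      = (\<Union>S\<in>nonspanning_sets k n G. {xs. length xs = t \<and> set xs = S})"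
    unfolding nonspanning_words_def nonspanning_sets_def by auto
  then have "card (nonspanning_words k n G t)
      = (\<Sum>S\<in>nonspanning_sets k n G. card {xs. length xs = t \<and> set xs = S})"
    using fin by (auto intro!: card_UN_disjoint finite_nonspanning_sets finite_words_with_letters)
  then show ?thesis
    using fin by (simp add: card_words_with_letters)
qed

lemma card_stopping_words:
  "card {xs. length xs = Suc t \<and> set xs \<subseteq> {0..<n} \<and> spans k G (set xs) \<and> \<not> spans k G (set (butlast xs))}
     + card (nonspanning_words k n G (Suc t))
   = n * card (nonspanning_words k n G t)"
  (is "card ?St + card ?N' = _")
proof -
  have snoc_image: "(\<lambda>(ys, x). ys @ [x]) ` (nonspanning_words k n G t \<times> {0..<n}) = ?St \<union> ?N'"
  proof (intro equalityI subsetI)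
    fix xs
    assume "xs \<in> ?St \<union> ?N'"
    then obtain ys x where xs: "xs = ys @ [x]" and "xs \<in> ?St \<union> ?N'"
      by (cases xs rule: rev_cases) (auto simp: nonspanning_words_def)
    moreover have "\<not> spans k G (set ys)" if "\<not> spans k G (set (ys @ [x]))"
      using that spans_mono[of "set (ys @ [x])" "set ys"] by auto
    ultimately show "xs \<in> (\<lambda>(ys, x). ys @ [x]) ` (nonspanning_words k n G t \<times> {0..<n})"
      by (auto simp: nonspanning_words_def)
  qed (auto simp: nonspanning_words_def)
  have "finite (?St \<union> ?N')"
    by (rule finite_subset[OF _ finite_lists_length_eq[of "{0..<n}" "Suc t"]])
      (auto simp: nonspanning_words_def)
  then have "card ?St + card ?N' = card (?St \<union> ?N')"
    by (intro card_Un_disjoint[symmetric]) (auto simp: nonspanning_words_def)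
  also have "\<dots> = card (nonspanning_words k n G t \<times> {0..<n})"
    unfolding snoc_image[symmetric] by (rule card_image) (auto simp: inj_on_def)
  finally show ?thesis
    by (simp add: card_cartesian_product)
qed

lemma stop_prob_Suc:
  assumes "0 < n"
  shows "stop_prob k n G (Suc t) = tail_prob k n G t - tail_prob k n G (Suc t)"
proof -
  have "real (card {xs. length xs = Suc t \<and> set xs \<subseteq> {0..<n} \<and> spans k G (set xs)
                     \<and> \<not> spans k G (set (butlast xs))})
      = real n * real (card (nonspanning_words k n G t)) - real (card (nonspanning_words k n G (Suc t)))"
    using arg_cong[OF card_stopping_words[of t n k G], of real] by simp
  then show ?thesis
    using assms by (simp add: stop_prob_def tail_prob_def field_simps)
qed

lemma expected_draws_eq_sum_tail_prob:
  assumes "0 < n" and "tail_prob k n G sums L" and "(\<lambda>t. real t * tail_prob k n G t) \<longlonglongrightarrow> 0"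
  shows "expected_draws k n G = L"
proof -
  have "(\<lambda>t. real (Suc t) * stop_prob k n G (Suc t)) sums L"
    using sums_Suc_times_diff[OF assms(2,3)] by (simp add: stop_prob_Suc[OF assms(1)])
  then have "(\<lambda>t. real t * stop_prob k n G t) sums L"
    using sums_Suc_iff[where f = "\<lambda>t. real t * stop_prob k n G t"] by simp
  then show ?thesis
    unfolding expected_draws_def by (rule sums_unique[symmetric])
qed

lemma card_nonspanning_set_less:
  assumes "spans k G {0..<n}" and "S \<in> nonspanning_sets k n G"
  shows "card S < n"
proof -
  have "S \<subset> {0..<n}"
    using assms unfolding nonspanning_sets_def by auto
  then show ?thesis
    using psubset_card_mono[of "{0..<n}" S] by simp
qed

lemma expected_draws_eq_sum_nonspanning_sets:
  assumes "0 < n" and "spans k G {0..<n}"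
  shows "expected_draws k n G = (\<Sum>S\<in>nonspanning_sets k n G. 1 / real ((n - 1) choose card S))"
proof (rule expected_draws_eq_sum_tail_prob[OF assms(1)])
  have tail_prob_eq: "tail_prob k n G = (\<lambda>t. \<Sum>S\<in>nonspanning_sets k n G.
                         real (fact (card S) * Stirling t (card S)) / real n ^ t)"
    by (simp add: fun_eq_iff tail_prob_def card_nonspanning_words sum_divide_distrib)
  show "tail_prob k n G sums (\<Sum>S\<in>nonspanning_sets k n G. 1 / real ((n - 1) choose card S))"
    unfolding tail_prob_eq
    by (intro sums_sum sums_fact_Stirling_div_power card_nonspanning_set_less[OF assms(2)])
  show "(\<lambda>t. real t * tail_prob k n G t) \<longlonglongrightarrow> 0"
    unfolding tail_prob_eq sum_distrib_left
    by (intro tendsto_null_sum times_fact_Stirling_div_power_tendsto_0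
        card_nonspanning_set_less[OF assms(2)])
qed

lemma sum_proper_subsets_inverse_binomial:
  assumes "finite A"
  shows "(\<Sum>S\<in>Pow A - {A}. 1 / real ((card A - 1) choose card S)) = real (card A) * harm (card A)"
proof -
  let ?n = "card A"
  have "(\<Sum>S\<in>Pow A - {A}. 1 / real ((?n - 1) choose card S))
      = (\<Sum>s<?n. \<Sum>S\<in>{S \<in> Pow A - {A}. card S = s}. 1 / real ((?n - 1) choose card S))"
    using assms by (intro sum.group[symmetric]) (auto intro!: psubset_card_mono)
  also have "\<dots> = (\<Sum>s<?n. real (?n choose s) / real ((?n - 1) choose s))"
  proof (rule sum.cong[OF refl])
    fix s
    assume "s \<in> {..<?n}"
    then have "{S \<in> Pow A - {A}. card S = s} = {S. S \<subseteq> A \<and> card S = s}"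
      by auto
    then show "(\<Sum>S\<in>{S \<in> Pow A - {A}. card S = s}. 1 / real ((?n - 1) choose card S))
             = real (?n choose s) / real ((?n - 1) choose s)"
      using n_subsets[OF assms, of s] by simp
  qed
  also have "\<dots> = (\<Sum>s<?n. real ?n / real (?n - s))"
  proof (rule sum.cong[OF refl])
    fix s
    assume "s \<in> {..<?n}"
    then show "real (?n choose s) / real ((?n - 1) choose s) = real ?n / real (?n - s)"
      using arg_cong[OF binomial_absorb_comp[of ?n s], of real] by (simp add: field_simps)
  qed
  also have "\<dots> = real ?n * (\<Sum>s<?n. inverse (real (Suc (?n - Suc s))))"
    by (simp add: sum_distrib_left divide_inverse Suc_diff_Suc)
  also have "\<dots> = real ?n * harm ?n"
    unfolding harm_altdef sum.nat_diff_reindex[of "\<lambda>i. inverse (real (Suc i))"] ..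
  finally show ?thesis .
qed

lemma sum_spanning_proper_subsets_inverse_binomial:
  fixes G :: "nat \<Rightarrow> nat \<Rightarrow> 'a::{finite,field}"
  assumes "0 < n"
  shows "(\<Sum>S\<in>{S \<in> Pow {0..<n} - {{0..<n}}. spans k G S}. 1 / real ((n - 1) choose card S))
       = (\<Sum>s=k..n-1. real (alpha k n G s) / real ((n - 1) choose s))"
proof -
  let ?P = "{S \<in> Pow {0..<n} - {{0..<n}}. spans k G S}"
  have card_range: "card S \<in> {k..n-1}" if "S \<in> ?P" for S
  proof -
    from that have "S \<subset> {0..<n}" and "spans k G S"
      by auto
    then show ?thesis
      using spans_card_ge[of S k G] psubset_card_mono[of "{0..<n}" S] finite_subset[of S "{0..<n}"]
      by auto
  qed
  have "(\<Sum>S\<in>?P. 1 / real ((n - 1) choose card S))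
      = (\<Sum>s=k..n-1. \<Sum>S\<in>{S \<in> ?P. card S = s}. 1 / real ((n - 1) choose card S))"
    by (intro sum.group[symmetric] image_subsetI card_range) auto
  also have "\<dots> = (\<Sum>s=k..n-1. real (alpha k n G s) / real ((n - 1) choose s))"
  proof (rule sum.cong[OF refl])
    fix s
    assume "s \<in> {k..n-1}"
    then have "{S \<in> ?P. card S = s} = {S. S \<subseteq> {0..<n} \<and> card S = s \<and> spans k G S}"
      using assms by auto
    then have "(\<Sum>S\<in>{S \<in> ?P. card S = s}. 1 / real ((n - 1) choose card S))
        = (\<Sum>S | S \<subseteq> {0..<n} \<and> card S = s \<and> spans k G S. 1 / real ((n - 1) choose s))"
      by (intro sum.cong) auto
    then show "(\<Sum>S\<in>{S \<in> ?P. card S = s}. 1 / real ((n - 1) choose card S))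
             = real (alpha k n G s) / real ((n - 1) choose s)"
      by (simp add: alpha_def)
  qed
  finally show ?thesis .
qed

lemma sum_nonspanning_sets_inverse_binomial:
  fixes G :: "nat \<Rightarrow> nat \<Rightarrow> 'a::{finite,field}"
  assumes "0 < n" and "spans k G {0..<n}"
  shows "(\<Sum>S\<in>nonspanning_sets k n G. 1 / real ((n - 1) choose card S))
     = real n * harm n - (\<Sum>s=k..n-1. real (alpha k n G s) / real ((n - 1) choose s))"
proof -
  let ?P = "Pow {0..<n} - {{0..<n}}"
  have "nonspanning_sets k n G = ?P - {S \<in> ?P. spans k G S}"
    using assms(2) unfolding nonspanning_sets_def by auto
  then have "(\<Sum>S\<in>nonspanning_sets k n G. 1 / real ((n - 1) choose card S))
      = (\<Sum>S\<in>?P. 1 / real ((n - 1) choose card S))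
        - (\<Sum>S\<in>{S \<in> ?P. spans k G S}. 1 / real ((n - 1) choose card S))"
    by (simp only:) (rule sum_diff; auto)
  also have "(\<Sum>S\<in>?P. 1 / real ((n - 1) choose card S)) = real n * harm n"
    using sum_proper_subsets_inverse_binomial[of "{0..<n}"] by simp
  also have "(\<Sum>S\<in>{S \<in> ?P. spans k G S}. 1 / real ((n - 1) choose card S))
      = (\<Sum>s=k..n-1. real (alpha k n G s) / real ((n - 1) choose s))"
    by (rule sum_spanning_proper_subsets_inverse_binomial[OF assms(1)])
  finally show ?thesis .
qed

theorem mainTheorem3:
  fixes G :: "nat \<Rightarrow> nat \<Rightarrow> 'a::{finite, field}" and k n :: nat
  assumes "2 \<le> k" and "k \<le> n"
    and "spans k G {0..<n}"
  shows "expected_draws k n G =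
           real n * harm n - (\<Sum>s=k..n-1. real (alpha k n G s) / real ((n - 1) choose s))"
proof -
  have "0 < n"
    using assms(1,2) by linarith
  have "expected_draws k n G = (\<Sum>S\<in>nonspanning_sets k n G. 1 / real ((n - 1) choose card S))"
    by (rule expected_draws_eq_sum_nonspanning_sets[OF \<open>0 < n\<close> assms(3)])
  also have "\<dots> = real n * harm n - (\<Sum>s=k..n-1. real (alpha k n G s) / real ((n - 1) choose s))"
    by (rule sum_nonspanning_sets_inverse_binomial[OF \<open>0 < n\<close> assms(3)])
  finally show ?thesis .
qed

end
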